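(* There exist absolute constants $\eta,c,C',A_1,A_2>0$ such that the following holds. Let $k\ge 3$ and $n>\eta k$ be such that $M=\frac{3.5\,k\log k}{n}$ is an integer. Define $u_j=(-1)^{M+1}\frac{j!}{M!}\big(\frac kn\big)^j s(M+1,j+1)$ for $1\le j\le M$ and $u_j=0$ otherwise; equivalently $u_j=w_j\,j!\,(\frac{k}{nM})^j$ where $w\in\mathbb{R}^M$ is the unique vector with $\sum_{j=1}^Mw_jx^j=1$ for all $x\in\{1/M,2/M,\dots,1\}$. Let $\tilde C=\hat C_{\rm seen}+\sum_{j\ge1}u_j\Phi_j$ and $\hat C=\min\{\max\{\tilde C,\hat C_{\rm seen}\},k\}$. Then under the Poisson sampling model, for every urn of $k$ balls, $$\mathbb{E}(\hat C-C)^2\le ke^{-cn/k}+k^{-0.5-3.5\frac kn\log\frac{k}{en}}+R,$$ where $R=k\exp\big(\frac{k^2\log k}{n^2}e^{-cn/k}\big)$ if $n\le A_1k\log\log k$; $R=k\big(C'\frac kn\log\frac{k^2\log k}{n^2}\big)^{2n/k}$ if $A_1k\log\log k\le n\le A_2k\sqrt{\log k}$; and $R=0$ if $n\ge A_2k\sqrt{\log k}$.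
   Context: An urn contains $k$ colored balls; $k_i$ is the number of balls of color $i$ and $C$ the number of distinct colors. Poisson sampling model: $N\sim\mathrm{Poi}(n)$ balls are drawn uniformly at random with replacement, independently of $N$; equivalently the histograms $N_i$ are independent $\mathrm{Poi}(nk_i/k)$. Fingerprints $\Phi_j=\#\{i:N_i=j\}$; $\hat C_{\rm seen}=\sum_{j\ge1}\Phi_j$. Stirling numbers of the first kind $s(a,b)$ are defined by $x(x-1)\cdots(x-a+1)=\sum_{b}s(a,b)x^b$. Logarithms are natural. (The paper states the case distinctions with $\lesssim$ and exponents with $\Theta(\cdot)$; these are expressed here through absolute constants.) *)

theory Defs
  imports "HOL-Probability.Probability" "HOL-Computational_Algebra.Polynomial"
begin

definition stirling1s :: "nat \<Rightarrow> nat \<Rightarrow> int" where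
  "stirling1s a b = coeff (\<Prod>i<a. [:- of_nat i, 1:]) b"

definition fingerprint :: "nat set \<Rightarrow> (nat \<Rightarrow> nat) \<Rightarrow> nat \<Rightarrow> nat" where
  "fingerprint I N j = card {i \<in> I. N i = j}"

definition C_seen :: "nat set \<Rightarrow> (nat \<Rightarrow> nat) \<Rightarrow> nat" where
  "C_seen I N = (\<Sum>j\<in>{1..Max (insert 0 (N ` I))}. fingerprint I N j)"

definition coef_u :: "nat \<Rightarrow> nat \<Rightarrow> real \<Rightarrow> nat \<Rightarrow> real" where
  "coef_u M k n j = (if 1 \<le> j \<and> j \<le> M then
      (-1) ^ (M + 1) * (fact j / fact M) * (real k / n) ^ j * of_int (stirling1s (M + 1) (j + 1))
    else 0)"

text \<open>C tilde = C_seen + sum_{j>=1} u_j Phi_j (only j<=M contribute).\<close>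
definition C_tilde :: "nat \<Rightarrow> nat \<Rightarrow> real \<Rightarrow> nat set \<Rightarrow> (nat \<Rightarrow> nat) \<Rightarrow> real" where
  "C_tilde M k n I N = real (C_seen I N) + (\<Sum>j\<in>{1..M}. coef_u M k n j * real (fingerprint I N j))"

definition C_hat :: "nat \<Rightarrow> nat \<Rightarrow> real \<Rightarrow> nat set \<Rightarrow> (nat \<Rightarrow> nat) \<Rightarrow> real" where
  "C_hat M k n I N = min (max (C_tilde M k n I N) (real (C_seen I N))) (real k)"

text \<open>Poisson sampling model: histograms N_i independent Poi(n k_i / k) for colours i in I
  (and N_i = 0 for non-colours).\<close>
definition poisson_hist :: "nat set \<Rightarrow> (nat \<Rightarrow> nat) \<Rightarrow> nat \<Rightarrow> real \<Rightarrow> (nat \<Rightarrow> nat) pmf" where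
  "poisson_hist I kc k n = Pi_pmf I 0 (\<lambda>i. poisson_pmf (n * real (kc i) / real k))"

end

theory Submission
  imports Defs
begin

(*
  Write t = n/k. A colour with a balls is seen N ~ Poi(t a) times, independently of the other
  colours, and contributes f(N) = u_N - [N = 0] to C_tilde - C. Because the u_j are signed
  Stirling numbers, E f(Poi(t a)) = e^(-t a) (-1)^(M+1) (a-1)(a-2)...(a-M) / M!: the bias
  vanishes for colours with at most M balls and is e^(-(t-1) a)-small for the others. The
  second moment is controlled by the Cauchy-type bound |s(M+1,j+1)| x^j <= (x+1)...(x+M),
  used at x = j / (1 + ln (M/K)) with a cutoff K ~ M e^(-t/4). Clamping C_tilde into
  [C_seen, k], an interval containing C, can only decrease the error, and independence of the
  colours bounds the mean squared error by k (max E f^2) + (k max |E f|)^2. For t >= 400 an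
  elementary case analysis turns this into k e^(-t/8), or into the bound of the first regime.
*)

section \<open>Elementary real inequalities\<close>

lemma power_div_fact_le_exp:
  fixes x :: real
  assumes "0 \<le> x"
  shows "x ^ n / fact n \<le> exp x"
proof -
  have "(\<Sum>i\<in>{n}. x ^ i /\<^sub>R fact i) \<le> (\<Sum>i. x ^ i /\<^sub>R fact i)"
    by (rule sum_le_suminf[OF summable_exp_generic]) (use assms in auto)
  then show ?thesis by (simp add: exp_def divide_inverse mult.commute)
qed

lemma power_div_le_exp_div_exp1:
  fixes B :: real
  assumes B: "0 \<le> B" and j: "1 \<le> j"
  shows "(B / real j) ^ j \<le> exp (B / exp 1)"
proof (cases "B = 0")
  case True
  then show ?thesis using j by (simp add: power_0_left)
next
  case False
  define y where "y = B / real j"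
  have y: "0 < y" using B False j by (simp add: y_def)
  have "ln (y / exp 1) \<le> y / exp 1 - 1" using y by (intro ln_le_minus_one) auto
  then have ln_y: "ln y \<le> y / exp 1" using y by (simp add: ln_div)
  have "y ^ j = exp (real j * ln y)" using y by (simp add: exp_of_nat_mult)
  also have "\<dots> \<le> exp (real j * (y / exp 1))"
    using ln_y by (intro exp_mono mult_left_mono) auto
  also have "real j * (y / exp 1) = B / exp 1" using j by (simp add: y_def)
  finally show ?thesis by (simp add: y_def)
qed

lemma sum_inverse_le_ln_diff:
  assumes "1 \<le> K" "K \<le> M"
  shows "(\<Sum>m\<in>{K<..M}. 1 / real m) \<le> ln (real M) - ln (real K)"
  using assms(2)
proof (induction M rule: dec_induct)
  case base
  then show ?case by simp
next
  case (step M)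
  have M: "0 < real M" using assms(1) step.hyps by simp
  have "ln (real M / real (Suc M)) \<le> real M / real (Suc M) - 1"
    using M by (intro ln_le_minus_one) auto
  moreover have "real M / real (Suc M) - 1 = - (1 / real (Suc M))" by (simp add: field_simps)
  ultimately have "1 / real (Suc M) \<le> ln (real (Suc M)) - ln (real M)"
    using M by (simp add: ln_div)
  moreover have "{K<..Suc M} = insert (Suc M) {K<..M}" using step.hyps by auto
  ultimately show ?case using step.IH by simp
qed

lemma prod_one_plus_div_le_exp_initial:
  fixes x :: real
  assumes x: "0 \<le> x" and K: "1 \<le> K"
  shows "(\<Prod>m\<in>{1..K}. 1 + x / real m) \<le> exp (x + real K)"
proof -
  have split: "(\<Prod>m\<in>{1..K}. 1 + x / real m)
      = (\<Prod>m\<in>{1..K}. (real m + x) / real K) * (\<Prod>m\<in>{1..K}. real K / real m)"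
    by (subst prod.distrib[symmetric], rule prod.cong) (auto simp: field_simps)
  have "(\<Prod>m\<in>{1..K}. (real m + x) / real K) \<le> (\<Prod>m\<in>{1..K}. exp (x / real K))"
  proof (rule prod_mono)
    fix m assume m: "m \<in> {1..K}"
    have "(real m + x) / real K \<le> exp ((real m + x) / real K - 1)"
      using exp_ge_add_one_self[of "(real m + x) / real K - 1"] by simp
    also have "\<dots> \<le> exp (x / real K)"
      using m K by (intro exp_mono) (auto simp: field_simps)
    finally show "0 \<le> (real m + x) / real K \<and> (real m + x) / real K \<le> exp (x / real K)"
      using x by auto
  qed
  also have "(\<Prod>m\<in>{1..K}. exp (x / real K)) = exp x"
    using K by (simp add: exp_of_nat_mult[symmetric])
  finally have head: "(\<Prod>m\<in>{1..K}. (real m + x) / real K) \<le> exp x" .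
  have "(\<Prod>m\<in>{1..K}. real K / real m) = real K ^ K / fact K"
    by (simp add: prod_dividef fact_prod)
  also have "\<dots> \<le> exp (real K)" by (rule power_div_fact_le_exp) simp
  finally have tail: "(\<Prod>m\<in>{1..K}. real K / real m) \<le> exp (real K)" .
  have "(\<Prod>m\<in>{1..K}. 1 + x / real m) \<le> exp x * exp (real K)"
    unfolding split by (rule mult_mono[OF head tail]) (use x in \<open>auto intro!: prod_nonneg\<close>)
  then show ?thesis by (simp add: exp_add)
qed

lemma prod_one_plus_div_le_exp:
  fixes x :: real
  assumes x: "0 \<le> x" and K: "1 \<le> K" "K \<le> M"
  shows "(\<Prod>m\<in>{1..M}. 1 + x / real m) \<le> exp (x + real K + x * (ln (real M) - ln (real K)))"
proof -
  have split: "{1..M} = {1..K} \<union> {K<..M}" using K by auto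
  have "(\<Prod>m\<in>{1..M}. 1 + x / real m)
      = (\<Prod>m\<in>{1..K}. 1 + x / real m) * (\<Prod>m\<in>{K<..M}. 1 + x / real m)"
    unfolding split by (rule prod.union_disjoint) auto
  also have "\<dots> \<le> exp (x + real K) * exp (x * (ln (real M) - ln (real K)))"
  proof (rule mult_mono)
    show "(\<Prod>m\<in>{1..K}. 1 + x / real m) \<le> exp (x + real K)"
      by (rule prod_one_plus_div_le_exp_initial[OF x K(1)])
    have "(\<Prod>m\<in>{K<..M}. 1 + x / real m) \<le> exp (\<Sum>m\<in>{K<..M}. x / real m)"
      by (rule prod_le_exp_sum) (use x in auto)
    also have "(\<Sum>m\<in>{K<..M}. x / real m) = x * (\<Sum>m\<in>{K<..M}. 1 / real m)"
      by (simp add: sum_distrib_left)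
    also have "exp \<dots> \<le> exp (x * (ln (real M) - ln (real K)))"
      by (intro exp_mono mult_left_mono sum_inverse_le_ln_diff K x)
    finally show "(\<Prod>m\<in>{K<..M}. 1 + x / real m) \<le> exp (x * (ln (real M) - ln (real K)))" .
  qed (use x in \<open>auto intro!: prod_nonneg\<close>)
  finally show ?thesis by (simp add: exp_add[symmetric] add.assoc)
qed

lemma linear_le_exp_div_8:
  fixes t :: real
  assumes t: "400 \<le> t"
  shows "38.5 * t \<le> exp (t / 8)"
proof -
  have "(t / 16)\<^sup>2 / 2 \<le> exp (t / 16)"
    using exp_lower_Taylor_quadratic[of "t / 16"] t by simp
  then have "((t / 16)\<^sup>2 / 2)\<^sup>2 \<le> (exp (t / 16))\<^sup>2" by (rule power_mono) simp
  also have "(exp (t / 16))\<^sup>2 = exp (t / 8)" by (simp add: power2_eq_square exp_add[symmetric])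
  finally have quartic: "((t / 16)\<^sup>2 / 2)\<^sup>2 \<le> exp (t / 8)" .
  have "400 ^ 3 \<le> t ^ 3" by (rule power_mono) (use t in auto)
  then have "38.5 * 262144 * t \<le> t ^ 3 * t" using t by (intro mult_right_mono) auto
  then have "38.5 * t \<le> ((t / 16)\<^sup>2 / 2)\<^sup>2" by (simp add: power2_eq_square power3_eq_cube field_simps)
  then show ?thesis using quartic by linarith
qed

section \<open>Stirling numbers of the first kind\<close>

definition falling_shift_poly :: "nat \<Rightarrow> int poly" where
  "falling_shift_poly M = (\<Prod>i<M. [:- of_nat i - 1, 1:])"

definition rising_shift_poly :: "nat \<Rightarrow> real poly" where
  "rising_shift_poly M = (\<Prod>i<M. [:of_nat i + 1, 1:])"

lemma stirling1s_Suc_Suc_eq_coeff: "stirling1s (Suc M) (Suc j) = coeff (falling_shift_poly M) j"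
proof -
  have "(\<Prod>i<Suc M. [:- (of_nat i :: int), 1:]) = [:0, 1:] * (\<Prod>i<M. [:- of_nat (Suc i), 1:])"
    by (subst prod.lessThan_Suc_shift) simp
  also have "(\<Prod>i<M. [:- of_nat (Suc i) :: int, 1:]) = falling_shift_poly M"
    unfolding falling_shift_poly_def by (rule prod.cong) auto
  finally show ?thesis unfolding stirling1s_def by (simp add: mult_pCons_left)
qed

lemma coeff_mult_monic_linear:
  "coeff (p * [:c, 1:]) j = c * coeff p j + (case j of 0 \<Rightarrow> 0 | Suc i \<Rightarrow> coeff p i)"
  for p :: "'a :: comm_ring_1 poly"
  by (cases j) (simp_all add: mult_pCons_right)

lemma abs_coeff_falling_shift_le_rising:
  "\<bar>real_of_int (coeff (falling_shift_poly M) j)\<bar> \<le> coeff (rising_shift_poly M) j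
   \<and> 0 \<le> coeff (rising_shift_poly M) j"
proof (induction M arbitrary: j)
  case 0
  then show ?case by (simp add: falling_shift_poly_def rising_shift_poly_def coeff_1)
next
  case (Suc M)
  define a where "a i = real_of_int (coeff (falling_shift_poly M) i)" for i
  define b where "b i = coeff (rising_shift_poly M) i" for i
  have ab: "\<bar>a i\<bar> \<le> b i" "0 \<le> b i" for i using Suc.IH[of i] by (auto simp: a_def b_def)
  have "falling_shift_poly (Suc M) = falling_shift_poly M * [:- of_nat M - 1, 1:]"
    by (simp add: falling_shift_poly_def)
  then have falling: "real_of_int (coeff (falling_shift_poly (Suc M)) j)
      = - (real M + 1) * a j + (case j of 0 \<Rightarrow> 0 | Suc i \<Rightarrow> a i)"
    by (simp add: coeff_mult_monic_linear a_def split: nat.split)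
  have "rising_shift_poly (Suc M) = rising_shift_poly M * [:of_nat M + 1, 1:]"
    by (simp add: rising_shift_poly_def)
  then have rising: "coeff (rising_shift_poly (Suc M)) j
      = (real M + 1) * b j + (case j of 0 \<Rightarrow> 0 | Suc i \<Rightarrow> b i)"
    by (simp add: coeff_mult_monic_linear b_def split: nat.split)
  have "\<bar>- (real M + 1) * a j + (case j of 0 \<Rightarrow> 0 | Suc i \<Rightarrow> a i)\<bar>
      \<le> (real M + 1) * \<bar>a j\<bar> + \<bar>case j of 0 \<Rightarrow> 0 | Suc i \<Rightarrow> a i\<bar>"
    by (rule order_trans[OF abs_triangle_ineq]) (simp add: abs_mult add.commute)
  also have "\<dots> \<le> (real M + 1) * b j + (case j of 0 \<Rightarrow> 0 | Suc i \<Rightarrow> b i)"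
    using ab by (intro add_mono mult_left_mono) (auto split: nat.split)
  finally show ?case
    unfolding falling rising using ab by (auto split: nat.split intro!: add_nonneg_nonneg)
qed

lemma poly_rising_shift_poly: "poly (rising_shift_poly M) x = (\<Prod>i<M. x + real i + 1)"
  by (simp add: rising_shift_poly_def poly_prod add.commute add.left_commute)

lemma coeff_rising_shift_poly_mult_power_le:
  assumes "0 \<le> x"
  shows "coeff (rising_shift_poly M) j * x ^ j \<le> (\<Prod>i<M. x + real i + 1)"
proof (cases "j \<le> degree (rising_shift_poly M)")
  case True
  have "coeff (rising_shift_poly M) j * x ^ j
      \<le> (\<Sum>i\<le>degree (rising_shift_poly M). coeff (rising_shift_poly M) i * x ^ i)"
    by (rule member_le_sum) (use True assms abs_coeff_falling_shift_le_rising in auto)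
  then show ?thesis by (simp add: poly_altdef[symmetric] poly_rising_shift_poly)
next
  case False
  then show ?thesis using assms by (simp add: coeff_eq_0 prod_nonneg)
qed

lemma prod_shift_eq_fact_mult_prod: "(\<Prod>i<M. x + real i + 1) = fact M * (\<Prod>m\<in>{1..M}. 1 + x / real m)"
proof (induction M)
  case 0
  then show ?case by simp
next
  case (Suc M)
  have "x + real M + 1 = (real M + 1) * (1 + x / real (Suc M))" by (simp add: field_simps)
  moreover have "{1..Suc M} = insert (Suc M) {1..M}" by auto
  ultimately show ?case by (simp add: Suc.IH mult_ac)
qed

text \<open>A Cauchy-type coefficient bound; \<open>x\<close> is optimised below.\<close>
lemma abs_coeff_falling_shift_le_exp:
  assumes x: "0 < x" and K: "1 \<le> K" "K \<le> M"
  shows "\<bar>real_of_int (coeff (falling_shift_poly M) j)\<bar>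
         \<le> fact M * exp (x + real K + x * (ln (real M) - ln (real K))) / x ^ j"
proof -
  have "\<bar>real_of_int (coeff (falling_shift_poly M) j)\<bar> \<le> coeff (rising_shift_poly M) j * x ^ j / x ^ j"
    using abs_coeff_falling_shift_le_rising[of M j] x by simp
  also have "\<dots> \<le> (\<Prod>i<M. x + real i + 1) / x ^ j"
    by (intro divide_right_mono coeff_rising_shift_poly_mult_power_le) (use x in auto)
  also have "\<dots> = fact M * (\<Prod>m\<in>{1..M}. 1 + x / real m) / x ^ j"
    by (simp add: prod_shift_eq_fact_mult_prod)
  also have "\<dots> \<le> fact M * exp (x + real K + x * (ln (real M) - ln (real K))) / x ^ j"
    by (intro divide_right_mono mult_left_mono prod_one_plus_div_le_exp K) (use x in auto)
  finally show ?thesis .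
qed

lemma sq_coeff_falling_shift_poly_div_fact_le:
  assumes K: "1 \<le> K" "K \<le> M" and j: "1 \<le> j"
  defines "L \<equiv> ln (real M) - ln (real K)"
  shows "(real_of_int (coeff (falling_shift_poly M) j) / fact M)\<^sup>2
         \<le> (exp 1 ^ 2 * (1 + L)\<^sup>2 / (real j)\<^sup>2) ^ j * exp (2 * real K)"
proof -
  define x where "x = real j / (1 + L)"
  have L: "0 \<le> L" using K by (simp add: L_def)
  have x: "0 < x" using j L by (simp add: x_def)
  have "x * (1 + L) = real j" using L by (simp add: x_def)
  then have xL: "x + real K + x * L = real j + real K" by (simp add: distrib_left)
  have "\<bar>real_of_int (coeff (falling_shift_poly M) j)\<bar> \<le> fact M * exp (real j + real K) / x ^ j"
    using abs_coeff_falling_shift_le_exp[OF x K, of j] unfolding L_def[symmetric] xL .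
  then have "\<bar>real_of_int (coeff (falling_shift_poly M) j)\<bar> / fact M \<le> exp (real j + real K) / x ^ j"
    by (simp add: field_simps)
  then have "(\<bar>real_of_int (coeff (falling_shift_poly M) j)\<bar> / fact M)\<^sup>2 \<le> (exp (real j + real K) / x ^ j)\<^sup>2"
    by (rule power_mono) simp
  also have "\<dots> = (exp 1 ^ 2 / x\<^sup>2) ^ j * exp (2 * real K)"
  proof -
    have "exp (real j + real K) = exp 1 ^ j * exp (real K)" by (simp add: exp_add exp_of_nat_mult[symmetric])
    moreover have "exp (2 * real K) = exp (real K) ^ 2" by (simp add: exp_of_nat_mult[symmetric])
    ultimately show ?thesis
      by (simp add: power_divide power_mult_distrib power_mult[symmetric] mult.commute)
  qed
  also have "exp 1 ^ 2 / x\<^sup>2 = exp 1 ^ 2 * (1 + L)\<^sup>2 / (real j)\<^sup>2"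
    using L by (simp add: x_def power_divide)
  finally show ?thesis by (simp add: power_divide)
qed

lemma sum_coeff_falling_shift_poly:
  "(\<Sum>j\<le>M. real_of_int (coeff (falling_shift_poly M) j) * real a ^ j) = (\<Prod>i<M. real a - real i - 1)"
proof -
  have "degree (falling_shift_poly M) \<le> (\<Sum>i<M. degree [:- of_nat i - 1 :: int, 1:])"
    unfolding falling_shift_poly_def
    using degree_prod_sum_le[of "{..<M}" "\<lambda>i. [:- of_nat i - 1 :: int, 1:]"] by (simp add: o_def)
  then have deg: "degree (falling_shift_poly M) \<le> M" by simp
  have "(\<Sum>j\<le>M. coeff (falling_shift_poly M) j * int a ^ j)
      = (\<Sum>j\<le>degree (falling_shift_poly M). coeff (falling_shift_poly M) j * int a ^ j)"
    by (rule sum.mono_neutral_right) (auto simp: deg coeff_eq_0)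
  also have "\<dots> = poly (falling_shift_poly M) (int a)" by (simp add: poly_altdef)
  also have "\<dots> = (\<Prod>i<M. int a - int i - 1)"
    unfolding falling_shift_poly_def poly_prod by (intro prod.cong) auto
  finally have "real_of_int (\<Sum>j\<le>M. coeff (falling_shift_poly M) j * int a ^ j)
      = real_of_int (\<Prod>i<M. int a - int i - 1)" by simp
  then show ?thesis by simp
qed

lemma coeff_0_falling_shift_poly: "coeff (falling_shift_poly M) 0 = (-1) ^ M * fact M"
proof -
  have "coeff (falling_shift_poly M) 0 = (\<Prod>i<M. - of_nat i - 1)"
    by (simp add: poly_0_coeff_0[symmetric] falling_shift_poly_def poly_prod)
  also have "\<dots> = (-1) ^ M * fact M" by (induction M) (auto simp: algebra_simps)
  finally show ?thesis .
qed

section \<open>The error contributed by a single colour\<close>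

text \<open>A colour seen \<open>j\<close> times contributes \<open>[j \<ge> 1] + u\<^sub>j - 1\<close> to \<open>C_tilde - C\<close>.\<close>
definition colour_error :: "nat \<Rightarrow> nat \<Rightarrow> real \<Rightarrow> nat \<Rightarrow> real" where
  "colour_error M k n j = coef_u M k n j - of_bool (j = 0)"

lemma colour_error_eq_0: "M < j \<Longrightarrow> colour_error M k n j = 0"
  by (simp add: colour_error_def coef_u_def)

lemma colour_error_0 [simp]: "colour_error M k n 0 = -1"
  by (simp add: colour_error_def coef_u_def)

lemma abs_colour_error_le: "\<bar>colour_error M k n j\<bar> \<le> (\<Sum>i\<le>M. \<bar>colour_error M k n i\<bar>)"
proof (cases "j \<le> M")
  case True
  then show ?thesis by (intro member_le_sum) auto
next
  case False
  then show ?thesis by (simp add: colour_error_eq_0 sum_nonneg)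
qed

lemma colour_error_eq_coeff:
  assumes "1 \<le> j" "j \<le> M"
  shows "colour_error M k n j
    = (-1) ^ (M + 1) * (fact j / fact M) * (real k / n) ^ j * real_of_int (coeff (falling_shift_poly M) j)"
  using assms stirling1s_Suc_Suc_eq_coeff[of M j] by (simp add: colour_error_def coef_u_def)

lemma expectation_pmf_finite_support:
  fixes p :: "nat pmf" and g :: "nat \<Rightarrow> real"
  assumes "\<And>j. M < j \<Longrightarrow> g j = 0"
  shows "measure_pmf.expectation p g = (\<Sum>j\<le>M. g j * pmf p j)"
  by (rule integral_measure_pmf_real) (use assms in \<open>auto simp: not_less[symmetric]\<close>)

lemma expectation_colour_error_poisson:
  assumes n: "0 < n" and k: "0 < k" and a: "1 \<le> a"
  shows "measure_pmf.expectation (poisson_pmf (n * real a / real k)) (colour_error M k n)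
       = exp (- (n * real a / real k)) * ((-1) ^ (M + 1) * (\<Prod>i<M. real a - real i - 1) / fact M)"
proof -
  define l where "l = n * real a / real k"
  have l: "0 < l" using n k a by (simp add: l_def)
  define s :: real where "s = (-1) ^ (M + 1) / fact M"
  define c where "c j = real_of_int (coeff (falling_shift_poly M) j)" for j
  have s_c0: "s * c 0 = -1"
    by (simp add: s_def c_def coeff_0_falling_shift_poly power_add)
  have "colour_error M k n j * (l ^ j / fact j) = s * (c j * real a ^ j)" if j: "j \<le> M" for j
  proof (cases "j = 0")
    case True
    then show ?thesis using s_c0 by simp
  next
    case False
    have "colour_error M k n j * (l ^ j / fact j) = s * (c j * (real k / n * l) ^ j)"
      using False j by (simp add: colour_error_eq_coeff s_def c_def power_mult_distrib field_simps)
    also have "real k / n * l = real a" using n k by (simp add: l_def)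
    finally show ?thesis using False by simp
  qed
  then have "(\<Sum>j\<le>M. colour_error M k n j * (l ^ j / fact j)) = (\<Sum>j\<le>M. s * (c j * real a ^ j))"
    by (intro sum.cong) auto
  also have "\<dots> = s * (\<Prod>i<M. real a - real i - 1)"
    by (simp add: sum_distrib_left[symmetric] c_def sum_coeff_falling_shift_poly)
  finally have sum_eq: "(\<Sum>j\<le>M. colour_error M k n j * (l ^ j / fact j))
      = s * (\<Prod>i<M. real a - real i - 1)" .
  have "measure_pmf.expectation (poisson_pmf l) (colour_error M k n)
      = (\<Sum>j\<le>M. colour_error M k n j * (l ^ j / fact j * exp (- l)))"
    by (subst expectation_pmf_finite_support[where M = M]) (use l in \<open>auto simp: colour_error_eq_0\<close>)
  also have "\<dots> = exp (- l) * (\<Sum>j\<le>M. colour_error M k n j * (l ^ j / fact j))"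
    by (simp add: sum_distrib_left mult_ac)
  finally show ?thesis unfolding sum_eq by (simp add: l_def s_def)
qed

lemma abs_expectation_colour_error_poisson_le:
  assumes n: "0 < n" and k: "0 < k" and a: "1 \<le> a" and t: "1 \<le> n / real k"
  shows "\<bar>measure_pmf.expectation (poisson_pmf (n * real a / real k)) (colour_error M k n)\<bar>
       \<le> exp (- (n / real k - 1) * (real M + 1))"
proof (cases "a \<le> M")
  case True
  have vanish: "(\<Prod>i<M. real a - real i - 1) = 0"
    by (rule prod_zero) (use True a in \<open>auto simp: of_nat_diff intro!: bexI[where x="a - 1"]\<close>)
  show ?thesis unfolding expectation_colour_error_poisson[OF n k a] vanish by simp
next
  case False
  define t where "t = n / real k"
  have "\<bar>\<Prod>i<M. real a - real i - 1\<bar> = (\<Prod>i<M. \<bar>real a - real i - 1\<bar>)" by (rule abs_prod)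
  also have "\<dots> \<le> (\<Prod>i<M. real a)" by (rule prod_mono) (use False in auto)
  finally have prod_le: "\<bar>\<Prod>i<M. real a - real i - 1\<bar> \<le> real a ^ M" by simp
  have "\<bar>measure_pmf.expectation (poisson_pmf (n * real a / real k)) (colour_error M k n)\<bar>
        = exp (- (t * real a)) * (\<bar>\<Prod>i<M. real a - real i - 1\<bar> / fact M)"
    by (simp add: expectation_colour_error_poisson[OF n k a] abs_mult t_def)
  also have "\<dots> \<le> exp (- (t * real a)) * exp (real a)"
    by (intro mult_left_mono order_trans[OF divide_right_mono[OF prod_le] power_div_fact_le_exp]) auto
  also have "\<dots> = exp (- (t - 1) * real a)" by (simp add: mult_exp_exp algebra_simps)
  also have "\<dots> \<le> exp (- (t - 1) * (real M + 1))"
  proof -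
    have "(t - 1) * (real M + 1) \<le> (t - 1) * real a"
      using False t by (intro mult_left_mono) (auto simp: t_def)
    then show ?thesis by (intro exp_mono) linarith
  qed
  finally show ?thesis by (simp add: t_def)
qed

lemma coeff_term_mult_poisson_le:
  fixes t a L K c :: real
  assumes t: "40 \<le> t" and a: "1 \<le> a" and j: "1 \<le> j" and L: "0 \<le> L" "L \<le> t / 4"
    and c: "(c / fact M)\<^sup>2 \<le> (exp 1 ^ 2 * (1 + L)\<^sup>2 / (real j)\<^sup>2) ^ j * exp (2 * K)"
  shows "((fact j / fact M) * (1 / t) ^ j * c)\<^sup>2 * ((t * a) ^ j / fact j * exp (- (t * a)))
           \<le> exp (2 * K - 3 * t * a / 4)"
proof -
  have tp: "0 < t" using t by simp
  have exp_mult: "exp (- (t * a)) * exp (2 * K) = exp (2 * K - t * a)" by (simp add: mult_exp_exp)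
  have "1 / t * (1 / t) * (t * a) = a / t" using tp by (simp add: field_simps power2_eq_square)
  then have t_powers: "(1 / t) ^ j * (1 / t) ^ j * (t * a) ^ j = (a / t) ^ j"
    by (metis power_mult_distrib)
  have "((fact j / fact M) * (1 / t) ^ j * c)\<^sup>2 * ((t * a) ^ j / fact j * exp (- (t * a)))
      = ((fact j / fact M)\<^sup>2 / fact j) * ((1 / t) ^ j * (1 / t) ^ j * (t * a) ^ j) * c\<^sup>2 * exp (- (t * a))"
    by (simp add: power2_eq_square)
  also have "\<dots> = fact j * (a / t) ^ j * exp (- (t * a)) * (c / fact M)\<^sup>2"
    unfolding t_powers by (simp add: power2_eq_square power_divide mult_ac)
  also have "\<dots> \<le> real j ^ j * (a / t) ^ j * exp (- (t * a)) * ((exp 1 ^ 2 * (1 + L)\<^sup>2 / (real j)\<^sup>2) ^ j * exp (2 * K))"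
    by (intro mult_mono c) (use fact_le_power[of j] tp a in auto)
  also have "\<dots> = (real j * (a / t) * (exp 1 ^ 2 * (1 + L)\<^sup>2 / (real j)\<^sup>2)) ^ j * exp (2 * K - t * a)"
    unfolding exp_mult[symmetric] by (simp only: power_mult_distrib mult_ac)
  also have "\<dots> = (exp 1 ^ 2 * a * (1 + L)\<^sup>2 / t / real j) ^ j * exp (2 * K - t * a)"
  proof -
    have "real j * (a / t) * (exp 1 ^ 2 * (1 + L)\<^sup>2 / (real j)\<^sup>2) = exp 1 ^ 2 * a * (1 + L)\<^sup>2 / t / real j"
      using j tp by (simp add: field_simps power2_eq_square)
    then show ?thesis by simp
  qed
  also have "\<dots> \<le> exp (exp 1 ^ 2 * a * (1 + L)\<^sup>2 / t / exp 1) * exp (2 * K - t * a)"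
    by (intro mult_right_mono power_div_le_exp_div_exp1) (use j a tp in auto)
  also have "\<dots> \<le> exp (t * a / 4) * exp (2 * K - t * a)"
  proof -
    have "(1 + L)\<^sup>2 \<le> (0.28 * t)\<^sup>2" by (rule power_mono) (use L t in auto)
    then have "exp 1 * a * (1 + L)\<^sup>2 / t \<le> 3 * a * (0.28 * t)\<^sup>2 / t"
      by (intro divide_right_mono mult_mono exp_le) (use a tp in auto)
    also have "\<dots> \<le> t * a / 4" using tp a by (simp add: power2_eq_square field_simps)
    finally show ?thesis by (simp add: power2_eq_square)
  qed
  also have "\<dots> = exp (2 * K - 3 * t * a / 4)" by (simp add: mult_exp_exp)
  finally show ?thesis .
qed

lemma expectation_colour_error_sq_poisson_le:
  assumes n: "0 < n" and k: "0 < k" and a: "1 \<le> a" and t: "40 \<le> n / real k"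
    and K: "1 \<le> K" "K \<le> M" and KL: "ln (real M) - ln (real K) \<le> n / real k / 4"
  shows "measure_pmf.expectation (poisson_pmf (n * real a / real k)) (\<lambda>j. (colour_error M k n j)\<^sup>2)
           \<le> (1 + real M) * exp (2 * real K - 3 * (n / real k) / 4)"
proof -
  define t where "t = n / real k"
  have t40: "40 \<le> t" and KL': "ln (real M) - ln (real K) \<le> t / 4" using t KL by (simp_all add: t_def)
  then have tp: "0 < t" by simp
  define B where "B = exp (2 * real K - 3 * t / 4)"
  define P where "P j = (t * real a) ^ j / fact j * exp (- (t * real a))" for j
  have "(colour_error M k n j)\<^sup>2 * P j \<le> B" if j: "j \<le> M" for j
  proof (cases "j = 0")
    case True
    have "t \<le> t * real a" using tp a by simp
    then have "- (t * real a) \<le> 2 * real K - 3 * t / 4" using tp by linarith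
    then show ?thesis using True by (simp add: P_def B_def)
  next
    case False
    define Y where "Y = (fact j / fact M) * (1 / t) ^ j * real_of_int (coeff (falling_shift_poly M) j)"
    have "colour_error M k n j = (-1) ^ (M + 1) * Y"
      using False j by (simp add: colour_error_eq_coeff Y_def t_def)
    then have "(colour_error M k n j)\<^sup>2 = Y\<^sup>2"
      by (simp add: power_mult_distrib power_mult[symmetric])
    moreover have "Y\<^sup>2 * P j \<le> exp (2 * real K - 3 * t * real a / 4)"
      unfolding Y_def P_def
      using sq_coeff_falling_shift_poly_div_fact_le[OF K, of j] False K KL' t40 a
      by (intro coeff_term_mult_poisson_le) auto
    moreover have "exp (2 * real K - 3 * t * real a / 4) \<le> B"
    proof -
      have "t \<le> t * real a" using tp a by simp
      then show ?thesis by (simp add: B_def)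
    qed
    ultimately show ?thesis by simp
  qed
  then have "(\<Sum>j\<le>M. (colour_error M k n j)\<^sup>2 * P j) \<le> (\<Sum>j\<le>M. B)"
    by (intro sum_mono) auto
  moreover have "measure_pmf.expectation (poisson_pmf (t * real a)) (\<lambda>j. (colour_error M k n j)\<^sup>2)
      = (\<Sum>j\<le>M. (colour_error M k n j)\<^sup>2 * P j)"
    by (subst expectation_pmf_finite_support[where M = M])
       (use tp a in \<open>auto simp: colour_error_eq_0 P_def\<close>)
  ultimately have "measure_pmf.expectation (poisson_pmf (t * real a)) (\<lambda>j. (colour_error M k n j)\<^sup>2)
      \<le> (1 + real M) * exp (2 * real K - 3 * t / 4)" by (simp add: B_def)
  then show ?thesis by (simp add: t_def)
qed

section \<open>Sums over independent components\<close>

lemma expectation_component_Pi_pmf: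
  fixes f :: "_ \<Rightarrow> real"
  assumes "finite I" "i \<in> I"
  shows "measure_pmf.expectation (Pi_pmf I d p) (\<lambda>N. f (N i)) = measure_pmf.expectation (p i) f"
proof -
  have "measure_pmf.expectation (Pi_pmf I d p) (\<lambda>N. f (N i))
        = measure_pmf.expectation (map_pmf (\<lambda>N. N i) (Pi_pmf I d p)) f"
    by simp
  also have "map_pmf (\<lambda>N. N i) (Pi_pmf I d p) = p i" using assms by (simp add: Pi_pmf_component)
  finally show ?thesis .
qed

lemma integrable_component_Pi_pmf:
  fixes f :: "_ \<Rightarrow> real"
  assumes "finite I" "i \<in> I" "integrable (measure_pmf (p i)) f"
  shows "integrable (measure_pmf (Pi_pmf I d p)) (\<lambda>N. f (N i))"
proof -
  have "integrable (map_pmf (\<lambda>N. N i) (Pi_pmf I d p)) f"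
    using assms by (simp add: Pi_pmf_component)
  then show ?thesis by simp
qed

lemma expectation_mult_components_Pi_pmf:
  fixes f g :: "_ \<Rightarrow> real"
  assumes fin: "finite I" and ij: "i \<in> I" "j \<in> I" "i \<noteq> j"
    and f: "integrable (measure_pmf (p i)) f" and g: "integrable (measure_pmf (p j)) g"
  shows "measure_pmf.expectation (Pi_pmf I d p) (\<lambda>N. f (N i) * g (N j))
       = measure_pmf.expectation (p i) f * measure_pmf.expectation (p j) g"
proof -
  define h where "h x = (if x = i then f else g)" for x
  have "prob_space.indep_vars (measure_pmf (Pi_pmf I d p)) (\<lambda>_. borel) (\<lambda>x N. h x (N x)) I"
    by (rule prob_space.indep_vars_compose2[OF prob_space_measure_pmf indep_vars_Pi_pmf[OF fin]]) simp
  then have indep: "prob_space.indep_vars (measure_pmf (Pi_pmf I d p)) (\<lambda>_. borel) (\<lambda>x N. h x (N x)) {i, j}"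
    by (rule prob_space.indep_vars_subset[OF prob_space_measure_pmf]) (use ij in auto)
  have "measure_pmf.expectation (Pi_pmf I d p) (\<lambda>N. \<Prod>x\<in>{i, j}. h x (N x))
        = (\<Prod>x\<in>{i, j}. measure_pmf.expectation (Pi_pmf I d p) (\<lambda>N. h x (N x)))"
    by (rule prob_space.indep_vars_lebesgue_integral[OF prob_space_measure_pmf _ indep])
       (use ij f g fin in \<open>auto simp: h_def intro: integrable_component_Pi_pmf\<close>)
  then show ?thesis
    using ij fin by (simp add: h_def expectation_component_Pi_pmf)
qed

lemma expectation_sq_sum_components_Pi_pmf_le:
  fixes g :: "_ \<Rightarrow> real"
  assumes fin: "finite I" and g: "\<And>v. \<bar>g v\<bar> \<le> B"
  shows "measure_pmf.expectation (Pi_pmf I d p) (\<lambda>N. (\<Sum>i\<in>I. g (N i))\<^sup>2)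
     \<le> (\<Sum>i\<in>I. measure_pmf.expectation (p i) (\<lambda>v. (g v)\<^sup>2))
        + (\<Sum>i\<in>I. \<bar>measure_pmf.expectation (p i) g\<bar>)\<^sup>2"
proof -
  define P where "P = Pi_pmf I d p"
  define mu where "mu i = measure_pmf.expectation (p i) g" for i
  define v where "v i = measure_pmf.expectation (p i) (\<lambda>x. (g x)\<^sup>2)" for i
  have B: "0 \<le> B" using g[of undefined] by simp
  have integrable: "integrable (measure_pmf q) g" for q
    by (rule measure_pmf.integrable_const_bound[where B = B]) (use g in auto)
  have "integrable (measure_pmf P) (\<lambda>N. g (N i) * g (N j))" for i j
    by (rule measure_pmf.integrable_const_bound[where B = "B * B"])
       (use g B in \<open>auto simp: abs_mult intro!: mult_mono\<close>)
  then have "measure_pmf.expectation P (\<lambda>N. (\<Sum>i\<in>I. g (N i))\<^sup>2)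
     = (\<Sum>i\<in>I. \<Sum>j\<in>I. measure_pmf.expectation P (\<lambda>N. g (N i) * g (N j)))"
    by (simp add: power2_eq_square sum_product Bochner_Integration.integral_sum)
  also have "\<dots> = (\<Sum>i\<in>I. \<Sum>j\<in>I. if i = j then v i else mu i * mu j)"
  proof (intro sum.cong refl)
    fix i j assume ij: "i \<in> I" "j \<in> I"
    show "measure_pmf.expectation P (\<lambda>N. g (N i) * g (N j)) = (if i = j then v i else mu i * mu j)"
    proof (cases "i = j")
      case True
      then show ?thesis
        using expectation_component_Pi_pmf[OF fin ij(1), of d p "\<lambda>x. (g x)\<^sup>2"]
        by (simp add: P_def v_def power2_eq_square)
    next
      case False
      then show ?thesis
        using expectation_mult_components_Pi_pmf[OF fin ij False integrable integrable]
        by (simp add: P_def mu_def)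
    qed
  qed
  also have "\<dots> \<le> (\<Sum>i\<in>I. \<Sum>j\<in>I. (if i = j then v i else 0) + \<bar>mu i\<bar> * \<bar>mu j\<bar>)"
    by (intro sum_mono) (auto simp: abs_mult[symmetric])
  also have "\<dots> = (\<Sum>i\<in>I. v i) + (\<Sum>i\<in>I. \<bar>mu i\<bar>)\<^sup>2"
    using fin by (simp add: sum.distrib power2_eq_square sum_product)
  finally show ?thesis unfolding P_def mu_def v_def .
qed

section \<open>The estimator as a sum over colours\<close>

lemma fingerprint_eq_sum: "finite I \<Longrightarrow> real (fingerprint I N j) = (\<Sum>i\<in>I. of_bool (N i = j))"
  by (simp add: fingerprint_def Int_def conj_commute)

lemma C_seen_eq_sum:
  assumes fin: "finite I"
  shows "real (C_seen I N) = (\<Sum>i\<in>I. of_bool (N i \<noteq> 0))"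
proof -
  define top where "top = Max (insert 0 (N ` I))"
  have le_top: "N i \<le> top" if "i \<in> I" for i
    unfolding top_def using fin that by (intro Max_ge) auto
  have "real (C_seen I N) = (\<Sum>j\<in>{1..top}. \<Sum>i\<in>I. of_bool (N i = j))"
    by (simp add: C_seen_def top_def fingerprint_eq_sum[OF fin])
  also have "\<dots> = (\<Sum>i\<in>I. \<Sum>j\<in>{1..top}. of_bool (N i = j))" by (rule sum.swap)
  also have "\<dots> = (\<Sum>i\<in>I. of_bool (N i \<noteq> 0))"
    by (intro sum.cong refl) (auto simp: of_bool_def sum.delta' dest: le_top)
  finally show ?thesis .
qed

lemma C_tilde_minus_card_eq_sum:
  assumes fin: "finite I"
  shows "C_tilde M k n I N - real (card I) = (\<Sum>i\<in>I. colour_error M k n (N i))"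
proof -
  have "(\<Sum>j\<in>{1..M}. coef_u M k n j * real (fingerprint I N j))
      = (\<Sum>j\<in>{1..M}. \<Sum>i\<in>I. coef_u M k n j * of_bool (N i = j))"
    by (simp add: fingerprint_eq_sum[OF fin] sum_distrib_left)
  also have "\<dots> = (\<Sum>i\<in>I. \<Sum>j\<in>{1..M}. coef_u M k n j * of_bool (N i = j))" by (rule sum.swap)
  also have "\<dots> = (\<Sum>i\<in>I. coef_u M k n (N i))"
    by (intro sum.cong refl) (auto simp: of_bool_def coef_u_def if_distrib sum.delta' cong: if_cong)
  finally have "C_tilde M k n I N - real (card I)
      = (\<Sum>i\<in>I. of_bool (N i \<noteq> 0)) + (\<Sum>i\<in>I. coef_u M k n (N i)) - (\<Sum>i\<in>I. 1)"
    by (simp add: C_tilde_def C_seen_eq_sum[OF fin])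
  also have "\<dots> = (\<Sum>i\<in>I. of_bool (N i \<noteq> 0) + coef_u M k n (N i) - 1)"
    by (simp only: sum.distrib sum_subtractf)
  also have "\<dots> = (\<Sum>i\<in>I. colour_error M k n (N i))"
    by (intro sum.cong refl) (simp add: colour_error_def)
  finally show ?thesis .
qed

lemma sq_clamp_le:
  fixes x c :: real
  assumes "lo \<le> c" "c \<le> hi"
  shows "(min (max x lo) hi - c)\<^sup>2 \<le> (x - c)\<^sup>2"
proof -
  have "\<bar>min (max x lo) hi - c\<bar> \<le> \<bar>x - c\<bar>" using assms by (simp add: min_def max_def abs_if)
  then show ?thesis by (simp add: abs_le_square_iff)
qed

lemma sq_C_hat_error_le:
  assumes fin: "finite I" and card: "card I \<le> k"
  shows "(C_hat M k n I N - real (card I))\<^sup>2 \<le> (\<Sum>i\<in>I. colour_error M k n (N i))\<^sup>2"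
proof -
  have "real (C_seen I N) \<le> (\<Sum>i\<in>I. 1)"
    unfolding C_seen_eq_sum[OF fin] by (intro sum_mono) auto
  then have "(C_hat M k n I N - real (card I))\<^sup>2 \<le> (C_tilde M k n I N - real (card I))\<^sup>2"
    unfolding C_hat_def using card by (intro sq_clamp_le) auto
  then show ?thesis by (simp only: C_tilde_minus_card_eq_sum[OF fin])
qed

lemma expectation_sq_C_hat_error_le_moments:
  assumes fin: "finite I" and card: "card I \<le> k"
  shows "measure_pmf.expectation (Pi_pmf I 0 p) (\<lambda>N. (C_hat M k n I N - real (card I))\<^sup>2)
     \<le> (\<Sum>i\<in>I. measure_pmf.expectation (p i) (\<lambda>v. (colour_error M k n v)\<^sup>2))
        + (\<Sum>i\<in>I. \<bar>measure_pmf.expectation (p i) (colour_error M k n)\<bar>)\<^sup>2"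
proof -
  define B where "B = (\<Sum>j\<le>M. \<bar>colour_error M k n j\<bar>)"
  have err: "\<bar>colour_error M k n v\<bar> \<le> B" for v
    unfolding B_def by (rule abs_colour_error_le)
  have sum_bounded: "\<bar>\<Sum>i\<in>I. colour_error M k n (N i)\<bar> \<le> real (card I) * B" for N
  proof -
    have "\<bar>\<Sum>i\<in>I. colour_error M k n (N i)\<bar> \<le> (\<Sum>i\<in>I. \<bar>colour_error M k n (N i)\<bar>)"
      by (rule sum_abs)
    also have "\<dots> \<le> (\<Sum>i\<in>I. B)" by (intro sum_mono err)
    finally show ?thesis by simp
  qed
  have bounded: "\<bar>(\<Sum>i\<in>I. colour_error M k n (N i))\<^sup>2\<bar> \<le> (real (card I) * B)\<^sup>2" for N
    using power_mono[OF sum_bounded[of N] abs_ge_zero, of 2] by simp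
  have "measure_pmf.expectation (Pi_pmf I 0 p) (\<lambda>N. (C_hat M k n I N - real (card I))\<^sup>2)
      \<le> measure_pmf.expectation (Pi_pmf I 0 p) (\<lambda>N. (\<Sum>i\<in>I. colour_error M k n (N i))\<^sup>2)"
  proof (rule integral_mono)
    show "integrable (measure_pmf (Pi_pmf I 0 p)) (\<lambda>N. (\<Sum>i\<in>I. colour_error M k n (N i))\<^sup>2)"
      by (rule measure_pmf.integrable_const_bound[where B = "(real (card I) * B)\<^sup>2"])
         (use bounded in auto)
    show "integrable (measure_pmf (Pi_pmf I 0 p)) (\<lambda>N. (C_hat M k n I N - real (card I))\<^sup>2)"
      by (rule measure_pmf.integrable_const_bound[where B = "(real (card I) * B)\<^sup>2"])
         (use bounded order_trans[OF sq_C_hat_error_le[OF fin card]] in auto)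
  qed (rule sq_C_hat_error_le[OF fin card])
  also have "\<dots> \<le> (\<Sum>i\<in>I. measure_pmf.expectation (p i) (\<lambda>v. (colour_error M k n v)\<^sup>2))
        + (\<Sum>i\<in>I. \<bar>measure_pmf.expectation (p i) (colour_error M k n)\<bar>)\<^sup>2"
    by (rule expectation_sq_sum_components_Pi_pmf_le[OF fin err])
  finally show ?thesis .
qed

lemma exists_nat_cutoff:
  assumes "0 < y" "y \<le> real M"
  obtains K where "1 \<le> K" "K \<le> M" "y \<le> real K" "real K \<le> y + 1"
proof
  show "1 \<le> nat \<lceil>y\<rceil>" "y \<le> real (nat \<lceil>y\<rceil>)" "real (nat \<lceil>y\<rceil>) \<le> y + 1"
    using assms(1) by linarith+
  show "nat \<lceil>y\<rceil> \<le> M" using assms(2) by (simp add: nat_le_iff ceiling_le_iff)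
qed

lemma exp_le_one_plus_if_half_lt:
  fixes t :: real
  assumes t: "4 \<le> t" and Q: "t / 2 < ln (1 + real M) + 2 + 2 * real M * exp (- t / 4)"
  shows "exp (t / 4 - 2) \<le> 1 + real M"
proof (rule ccontr)
  assume "\<not> exp (t / 4 - 2) \<le> 1 + real M"
  then have small: "1 + real M < exp (t / 4 - 2)" by simp
  then have "ln (1 + real M) < t / 4 - 2"
    by (metis add_pos_nonneg ln_exp ln_less_cancel_iff of_nat_0_le_iff zero_less_one exp_gt_zero)
  moreover have "real M * exp (- t / 4) \<le> exp (- 2)"
  proof -
    have "real M * exp (- t / 4) \<le> exp (t / 4 - 2) * exp (- t / 4)"
      using small by (intro mult_right_mono) auto
    then show ?thesis by (simp add: mult_exp_exp)
  qed
  moreover have "exp (- 2) \<le> (1 / 2 :: real)"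
    using exp_ge_add_one_self[of 2] by (simp add: exp_minus field_simps)
  ultimately show False using Q t by linarith
qed

lemma ln_one_plus_le_of_exp_le:
  fixes t :: real
  assumes t: "400 \<le> t" and M: "exp (t / 4 - 2) \<le> 1 + real M"
  shows "ln (1 + real M) + 2 + 2 * real M * exp (- t / 4) - 3 * t / 4
         \<le> real M * (exp (- t / 8) / (3.5 * t))"
proof -
  define E where "E = exp (- t / 4)"
  define y where "y = exp (t / 4 - 2)"
  have E: "0 < E" by (simp add: E_def)
  have y: "0 < y" by (simp add: y_def)
  have "ln ((1 + real M) / y) \<le> (1 + real M) / y - 1" using y by (intro ln_le_minus_one) simp
  then have "ln (1 + real M) \<le> t / 4 - 3 + (1 + real M) / y" using y by (simp add: ln_div y_def)
  moreover have "(1 + real M) / y = exp 2 * ((1 + real M) * E)"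
  proof -
    have "exp 2 * E * y = 1" by (simp add: y_def E_def mult_exp_exp)
    then show ?thesis using y by (simp add: field_simps)
  qed
  moreover have "exp (2::real) \<le> 9"
  proof -
    have "exp (2::real) = exp 1 ^ 2" by (simp add: exp_of_nat_mult[symmetric])
    also have "\<dots> \<le> 3 ^ 2" by (rule power_mono) (use exp_le in auto)
    finally show ?thesis by simp
  qed
  then have "exp 2 * ((1 + real M) * E) \<le> 9 * ((1 + real M) * E)"
    by (intro mult_right_mono) (simp_all add: E_def)
  ultimately have "ln (1 + real M) \<le> t / 4 - 3 + 9 * ((1 + real M) * E)" by linarith
  then have "ln (1 + real M) + 2 + 2 * real M * E - 3 * t / 4 \<le> - t / 2 - 1 + (1 + real M) * (11 * E)"
    using E by (simp add: algebra_simps)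
  also have "\<dots> \<le> - t / 2 - 1 + (1 + real M) * (exp (- t / 8) / (3.5 * t))"
  proof -
    have "38.5 * t * exp (- t / 4) \<le> exp (t / 8) * exp (- t / 4)"
      using linear_le_exp_div_8[OF t] by simp
    then have "11 * E \<le> exp (- t / 8) / (3.5 * t)"
      using t by (simp add: E_def mult_exp_exp field_simps)
    then show ?thesis by (intro add_left_mono mult_left_mono) auto
  qed
  also have "\<dots> \<le> real M * (exp (- t / 8) / (3.5 * t))"
  proof -
    define \<alpha> where "\<alpha> = exp (- t / 8) / (3.5 * t)"
    have "\<alpha> \<le> 1"
      using t by (simp add: \<alpha>_def field_simps) (smt (verit) exp_le_one_iff divide_le_eq_1)
    moreover have "(1 + real M) * \<alpha> = \<alpha> + real M * \<alpha>" by (simp add: algebra_simps)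
    ultimately show ?thesis using t unfolding \<alpha>_def[symmetric] by linarith
  qed
  finally show ?thesis by (simp add: E_def)
qed

lemma variance_bound_dichotomy:
  fixes t L K :: real
  assumes t: "400 \<le> t" and M: "1 \<le> M" and L: "L = real M * t / 3.5"
    and K: "K \<le> real M * exp (- t / 4) + 1"
  defines "X \<equiv> (1 + real M) * exp (2 * K - 3 * t / 4) + exp (- t)"
  shows "X \<le> exp (- t / 8) \<or> (t \<le> 12 * ln L \<and> X \<le> exp (L / t\<^sup>2 * exp (- t / 8)) + exp (- t / 8))"
proof -
  define Q where "Q = ln (1 + real M) + 2 + 2 * real M * exp (- t / 4)"
  have "(1 + real M) * exp (2 * K - 3 * t / 4) = exp (ln (1 + real M) + (2 * K - 3 * t / 4))"
    by (simp add: exp_add)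
  also have "\<dots> \<le> exp (Q - 3 * t / 4)" unfolding Q_def using K by simp
  finally have first: "(1 + real M) * exp (2 * K - 3 * t / 4) \<le> exp (Q - 3 * t / 4)" .
  have second: "exp (- t) \<le> exp (- t / 8)" using t by simp
  show ?thesis
  proof (cases "Q \<le> t / 2")
    case True
    have "2 \<le> exp (t / 8)" using exp_ge_add_one_self[of "t / 8"] t by linarith
    then have "exp (- t / 4) * 2 \<le> exp (- t / 4) * exp (t / 8)" by simp
    then have "2 * exp (- t / 4) \<le> exp (- t / 8)" by (simp add: mult_exp_exp)
    moreover have "exp (Q - 3 * t / 4) \<le> exp (- t / 4)" using True by simp
    moreover have "exp (- t) \<le> exp (- t / 4)" using t by simp
    ultimately have "X \<le> exp (- t / 8)" using first unfolding X_def by linarith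
    then show ?thesis ..
  next
    case False
    have large: "exp (t / 4 - 2) \<le> 1 + real M"
      using exp_le_one_plus_if_half_lt[of t] t False by (simp add: Q_def)
    have LM: "real M \<le> L" using t M by (simp add: L field_simps)
    have "t / 4 - 2 \<le> ln (1 + real M)"
      using large by (metis add_pos_nonneg ln_exp ln_le_cancel_iff of_nat_0_le_iff zero_less_one exp_gt_zero)
    also have "\<dots> \<le> ln (2 * L)" using LM M by simp
    also have "\<dots> = ln 2 + ln L" using LM M by (simp add: ln_mult)
    also have "ln (2::real) \<le> 1" using ln_le_minus_one[of 2] by simp
    finally have "t \<le> 12 * ln L" using t by linarith
    moreover have "X \<le> exp (L / t\<^sup>2 * exp (- t / 8)) + exp (- t / 8)"
    proof -
      have "Q - 3 * t / 4 \<le> L / t\<^sup>2 * exp (- t / 8)"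
        using ln_one_plus_le_of_exp_le[OF t large] t
        by (simp add: Q_def L power2_eq_square field_simps)
      then have "exp (Q - 3 * t / 4) \<le> exp (L / t\<^sup>2 * exp (- t / 8))" by simp
      then show ?thesis using first second unfolding X_def by linarith
    qed
    ultimately show ?thesis by simp
  qed
qed

section \<open>The mean squared error\<close>

lemma card_le_sum_multiplicities:
  assumes "finite I" "\<forall>i\<in>I. kc i \<ge> 1" "(\<Sum>i\<in>I. kc i) = (k::nat)"
  shows "card I \<le> k"
proof -
  have "card I = (\<Sum>i\<in>I. 1::nat)" by simp
  also have "\<dots> \<le> (\<Sum>i\<in>I. kc i)" using assms(2) by (intro sum_mono) auto
  finally show ?thesis using assms(3) by simp
qed

lemma sq_bias_sum_le:
  fixes t x :: real
  assumes t: "2 \<le> t" and M: "1 \<le> M" and x: "x = exp (real M * t / 3.5)"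
  shows "(x * exp (- (t - 1) * (real M + 1)))\<^sup>2 \<le> x * exp (- t)"
proof -
  have "2 * real M \<le> t * real M" using t by (intro mult_right_mono) auto
  moreover have "real M * t / 3.5 - 2 * (t - 1) * (real M + 1)
      = - (12 / 7) * (t * real M) - 2 * t + 2 * real M + 2" by (simp add: algebra_simps)
  ultimately have "real M * t / 3.5 - 2 * (t - 1) * (real M + 1) \<le> - t" using M t by linarith
  then have "exp (real M * t / 3.5) * exp (- (t - 1) * (real M + 1)) ^ 2 \<le> exp (- t)"
    by (simp add: mult_exp_exp exp_of_nat_mult[symmetric] algebra_simps)
  then show ?thesis
    unfolding x by (simp add: power2_eq_square mult_exp_exp algebra_simps)
qed

lemma expectation_sq_C_hat_error_le:
  fixes k :: nat and n :: real and I :: "nat set"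
  defines "t \<equiv> n / real k"
  assumes k: "0 < k" and t: "400 \<le> t" and M: "real M = 3.5 * real k * ln (real k) / n"
    and fin: "finite I" and kc: "\<forall>i\<in>I. kc i \<ge> 1" "(\<Sum>i\<in>I. kc i) = k"
    and K: "1 \<le> K" "K \<le> M" and KL: "ln (real M) - ln (real K) \<le> t / 4"
  shows "measure_pmf.expectation (poisson_hist I kc k n) (\<lambda>N. (C_hat M k n I N - real (card I))\<^sup>2)
      \<le> real k * ((1 + real M) * exp (2 * real K - 3 * t / 4) + exp (- t))"
proof -
  define p where "p i = poisson_pmf (n * real (kc i) / real k)" for i
  define X where "X = (1 + real M) * exp (2 * real K - 3 * t / 4)"
  define b where "b = exp (- (t - 1) * (real M + 1))"
  have n: "0 < n" using k t by (simp add: t_def field_simps)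
  have card: "card I \<le> k" by (rule card_le_sum_multiplicities[OF fin kc])
  have "(\<Sum>i\<in>I. measure_pmf.expectation (p i) (\<lambda>v. (colour_error M k n v)\<^sup>2)) \<le> (\<Sum>i\<in>I. X)"
    using kc t KL unfolding p_def X_def t_def
    by (intro sum_mono expectation_colour_error_sq_poisson_le n k K) auto
  also have "\<dots> \<le> real k * X" using card by (simp add: X_def mult_right_mono)
  finally have variance: "(\<Sum>i\<in>I. measure_pmf.expectation (p i) (\<lambda>v. (colour_error M k n v)\<^sup>2))
      \<le> real k * X" .
  have "(\<Sum>i\<in>I. \<bar>measure_pmf.expectation (p i) (colour_error M k n)\<bar>) \<le> (\<Sum>i\<in>I. b)"
    using kc t unfolding p_def b_def t_def
    by (intro sum_mono abs_expectation_colour_error_poisson_le n k) auto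
  also have "\<dots> \<le> real k * b" using card by (simp add: b_def mult_right_mono)
  finally have "(\<Sum>i\<in>I. \<bar>measure_pmf.expectation (p i) (colour_error M k n)\<bar>)\<^sup>2 \<le> (real k * b)\<^sup>2"
    by (rule power_mono) (simp add: sum_nonneg)
  also have "\<dots> \<le> real k * exp (- t)"
  proof -
    have "1 \<le> M" using K by simp
    moreover have "real k = exp (real M * t / 3.5)" using k n M by (simp add: t_def field_simps)
    ultimately show ?thesis using sq_bias_sum_le[of t] t by (simp add: b_def)
  qed
  finally have bias: "(\<Sum>i\<in>I. \<bar>measure_pmf.expectation (p i) (colour_error M k n)\<bar>)\<^sup>2
      \<le> real k * exp (- t)" .
  have "poisson_hist I kc k n = Pi_pmf I 0 p" unfolding poisson_hist_def p_def[abs_def] ..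
  then show ?thesis
    using expectation_sq_C_hat_error_le_moments[OF fin card, of p M n] variance bias
    by (simp add: X_def algebra_simps)
qed

lemma expectation_sq_C_hat_error_cases:
  fixes k M :: nat and n :: real and I :: "nat set" and kc :: "nat \<Rightarrow> nat"
  defines "E \<equiv> measure_pmf.expectation (poisson_hist I kc k n) (\<lambda>N. (C_hat M k n I N - real (card I))\<^sup>2)"
  assumes k: "3 \<le> k" and n: "400 * real k < n" and M: "real M = 3.5 * real k * ln (real k) / n"
    and fin: "finite I" and kc: "\<forall>i\<in>I. kc i \<ge> 1" "(\<Sum>i\<in>I. kc i) = k"
  shows "E \<le> real k * exp (- (1/8) * n / real k)
    \<or> (n \<le> 12 * real k * ln (ln (real k)) \<and>
       E \<le> real k * exp (- (1/8) * n / real k)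
          + real k * exp ((real k)\<^sup>2 * ln (real k) / n\<^sup>2 * exp (- (1/8) * n / real k)))"
proof -
  define t where "t = n / real k"
  have k0: "0 < real k" using k by simp
  have t: "400 \<le> t" using n k0 by (simp add: t_def field_simps)
  have n_eq: "n = t * real k" using k0 by (simp add: t_def)
  have ln_k: "ln (real k) = real M * t / 3.5" using M n k0 by (simp add: t_def field_simps)
  moreover have "0 < ln (real k)" using k by simp
  ultimately have M1: "1 \<le> M" by (cases M) auto
  have y: "0 < real M * exp (- t / 4)" "real M * exp (- t / 4) \<le> real M"
    using M1 t by (simp_all add: mult_left_le)
  then obtain K where K: "1 \<le> K" "K \<le> M"
    and K_bounds: "real M * exp (- t / 4) \<le> real K" "real K \<le> real M * exp (- t / 4) + 1"
    by (rule exists_nat_cutoff)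
  have "ln (real M) - t / 4 = ln (real M * exp (- t / 4))" using M1 by (simp add: ln_mult)
  also have "\<dots> \<le> ln (real K)" using K_bounds(1) y(1) by simp
  finally have KL: "ln (real M) - ln (real K) \<le> t / 4" by simp
  define X where "X = (1 + real M) * exp (2 * real K - 3 * t / 4) + exp (- t)"
  have E: "E \<le> real k * X"
    unfolding E_def X_def t_def
    using expectation_sq_C_hat_error_le[OF _ _ M fin kc K] k0 t KL by (simp add: t_def)
  have "X \<le> exp (- t / 8)
      \<or> (t \<le> 12 * ln (ln (real k)) \<and> X \<le> exp (ln (real k) / t\<^sup>2 * exp (- t / 8)) + exp (- t / 8))"
    unfolding X_def by (rule variance_bound_dichotomy[OF t M1 ln_k K_bounds(2)])
  moreover have "exp (- (1/8) * n / real k) = exp (- t / 8)" by (simp add: t_def)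
  moreover have "(real k)\<^sup>2 * ln (real k) / n\<^sup>2 = ln (real k) / t\<^sup>2"
    using k0 by (simp add: n_eq power2_eq_square)
  moreover have "n \<le> 12 * real k * ln (ln (real k)) \<longleftrightarrow> t \<le> 12 * ln (ln (real k))"
    using k0 by (simp add: n_eq)
  moreover have "E \<le> real k * Y" if "X \<le> Y" for Y
    using E mult_left_mono[OF that, of "real k"] by simp
  moreover have "E \<le> real k * Y + real k * Z" if "X \<le> Z + Y" for Y Z
    using E mult_left_mono[OF that, of "real k"] by (simp add: distrib_left)
  ultimately show ?thesis by metis
qed

text \<open>With \<open>\<eta> = 400\<close> the \<open>powr\<close> term and the middle regime are slack: outside the first regime
  the bound \<open>k * exp (- n / (8 * k))\<close> already holds.\<close>
lemma expectation_sq_C_hat_error_le_regimes: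
  fixes k M :: nat and n :: real and I :: "nat set" and kc :: "nat \<Rightarrow> nat"
  assumes hyps: "3 \<le> k" "400 * real k < n" "real M = 3.5 * real k * ln (real k) / n"
    "finite I" "\<forall>i\<in>I. 1 \<le> kc i" "(\<Sum>i\<in>I. kc i) = k"
  shows "measure_pmf.expectation (poisson_hist I kc k n) (\<lambda>N. (C_hat M k n I N - real (card I))\<^sup>2)
       \<le> real k * exp (- (1/8) * n / real k)
         + real k powr (-0.5 - 3.5 * (real k / n) * ln (real k / (exp 1 * n)))
         + (if n \<le> 12 * real k * ln (ln (real k))
            then real k * exp ((real k)\<^sup>2 * ln (real k) / n\<^sup>2 * exp (- (1/8) * n / real k))
            else if n \<le> 1 * real k * sqrt (ln (real k))
            then real k * (1 * (real k / n) * ln ((real k)\<^sup>2 * ln (real k) / n\<^sup>2)) powr (2 * n / real k)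
            else 0)"
proof -
  define R where "R = (if n \<le> 12 * real k * ln (ln (real k))
      then real k * exp ((real k)\<^sup>2 * ln (real k) / n\<^sup>2 * exp (- (1/8) * n / real k))
      else if n \<le> 1 * real k * sqrt (ln (real k))
      then real k * (1 * (real k / n) * ln ((real k)\<^sup>2 * ln (real k) / n\<^sup>2)) powr (2 * n / real k)
      else 0)"
  have "0 \<le> real k powr (-0.5 - 3.5 * (real k / n) * ln (real k / (exp 1 * n)))" by simp
  moreover have "0 \<le> R" by (simp add: R_def)
  moreover have "R = real k * exp ((real k)\<^sup>2 * ln (real k) / n\<^sup>2 * exp (- (1/8) * n / real k))"
    if "n \<le> 12 * real k * ln (ln (real k))" using that by (simp add: R_def)
  moreover note expectation_sq_C_hat_error_cases[OF hyps]
  ultimately show ?thesis unfolding R_def[symmetric] by linarith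
qed

theorem theorem2:
  shows "\<exists>\<eta> c C' A\<^sub>1 A\<^sub>2 :: real. \<eta> > 0 \<and> c > 0 \<and> C' > 0 \<and> A\<^sub>1 > 0 \<and> A\<^sub>2 > 0 \<and>
    (\<forall>(k::nat) (n::real) (M::nat) (I::nat set) (kc::nat \<Rightarrow> nat).
       k \<ge> 3 \<longrightarrow> n > \<eta> * real k \<longrightarrow>
       real M = 3.5 * real k * ln (real k) / n \<longrightarrow>
       finite I \<longrightarrow> (\<forall>i\<in>I. kc i \<ge> 1) \<longrightarrow> (\<Sum>i\<in>I. kc i) = k \<longrightarrow>
       measure_pmf.expectation (poisson_hist I kc k n)
          (\<lambda>N. (C_hat M k n I N - real (card I))\<^sup>2)
       \<le> real k * exp (- c * n / real k)
         + real k powr (-0.5 - 3.5 * (real k / n) * ln (real k / (exp 1 * n)))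
         + (if n \<le> A\<^sub>1 * real k * ln (ln (real k))
            then real k * exp ((real k)\<^sup>2 * ln (real k) / n\<^sup>2 * exp (- c * n / real k))
            else if n \<le> A\<^sub>2 * real k * sqrt (ln (real k))
            then real k * (C' * (real k / n) * ln ((real k)\<^sup>2 * ln (real k) / n\<^sup>2)) powr (2 * n / real k)
            else 0))"
  by (rule exI[of _ 400], rule exI[of _ "1/8"], rule exI[of _ 1], rule exI[of _ 12], rule exI[of _ 1],
      intro conjI allI impI, simp_all only: zero_less_numeral zero_less_divide_iff zero_less_one, simp)
     (rule expectation_sq_C_hat_error_le_regimes)

end
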